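(* Let $\{\bm{y}_m\}_{m=1}^N\subseteq\mathbb{R}^p$ and let $\{\bm{x}'_j\}_{j=1}^n\subseteq\mathbb{R}^p$ be pairwise distinct with $\bm{x}'_i\ne\bm{y}_m$ for all $i,m$. Define, for $\bm{x}_1,\dots,\bm{x}_n\in\mathbb{R}^p$, $h^Q(\{\bm{x}_i\};\{\bm{x}'_j\}) = \frac{2}{nN}\sum_{i=1}^n\sum_{m=1}^N\left\{\frac{\|\bm{y}_m-\bm{x}_i\|_2^2}{2\|\bm{y}_m-\bm{x}'_i\|_2} + \frac{\|\bm{y}_m-\bm{x}'_i\|_2}{2}\right\} - \frac{1}{n^2}\sum_{i=1}^n\sum_{j\ne i}\left(\|\bm{x}'_i-\bm{x}'_j\|_2 + \frac{2(\bm{x}_i-\bm{x}'_i)^T(\bm{x}'_i-\bm{x}'_j)}{\|\bm{x}'_i-\bm{x}'_j\|_2}\right).$ Then $h^Q(\cdot;\{\bm{x}'_j\})$ majorizes $\hat E$ at $\{\bm{x}'_j\}_{j=1}^n$, i.e. $h^Q(\{\bm{x}_i\};\{\bm{x}'_j\})\ge\hat E(\{\bm{x}_i\};\{\bm{y}_m\})$ for all $(\bm{x}_1,\dots,\bm{x}_n)$, with equality at $\bm{x}_i=\bm{x}'_i$. Moreover, the global minimizer of $h^Q(\cdot;\{\bm{x}'_j\})$ is given by $\bm{x}_i = \left(\sum_{m=1}^N\|\bm{x}'_i-\bm{y}_m\|_2^{-1}\right)^{-1}\left(\frac{N}{n}\sum_{j\ne i}\frac{\bm{x}'_i-\bm{x}'_j}{\|\bm{x}'_i-\bm{x}'_j\|_2}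 + \sum_{m=1}^N\frac{\bm{y}_m}{\|\bm{x}'_i-\bm{y}_m\|_2}\right),\quad i=1,\dots,n.$
   Context: $\hat E(\{\bm{x}_i\};\{\bm{y}_m\}) = \frac{2}{nN}\sum_{i=1}^n\sum_{m=1}^N\|\bm{y}_m-\bm{x}_i\|_2 - \frac{1}{n^2}\sum_{i=1}^n\sum_{j=1}^n\|\bm{x}_i-\bm{x}_j\|_2$, viewed as a function of $(\bm{x}_1,\dots,\bm{x}_n)\in(\mathbb{R}^p)^n$. *)

theory Defs
  imports "HOL-Analysis.Analysis"
begin

definition Ehat :: "nat \<Rightarrow> nat \<Rightarrow> (nat \<Rightarrow> 'a::euclidean_space) \<Rightarrow> (nat \<Rightarrow> 'a) \<Rightarrow> real" where
  "Ehat n N y x =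
     2 / (real n * real N) * (\<Sum>i=1..n. \<Sum>m=1..N. norm (y m - x i))
     - 1 / (real n)^2 * (\<Sum>i=1..n. \<Sum>j=1..n. norm (x i - x j))"

definition hQ :: "nat \<Rightarrow> nat \<Rightarrow> (nat \<Rightarrow> 'a::euclidean_space) \<Rightarrow> (nat \<Rightarrow> 'a) \<Rightarrow> (nat \<Rightarrow> 'a) \<Rightarrow> real" where
  "hQ n N y x' x =
     2 / (real n * real N) * (\<Sum>i=1..n. \<Sum>m=1..N.
        (norm (y m - x i))^2 / (2 * norm (y m - x' i)) + norm (y m - x' i) / 2)
     - 1 / (real n)^2 * (\<Sum>i=1..n. \<Sum>j\<in>{1..n} - {i}.
        norm (x' i - x' j) + 2 * ((x i - x' i) \<bullet> (x' i - x' j)) / norm (x' i - x' j))"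

definition hQ_min :: "nat \<Rightarrow> nat \<Rightarrow> (nat \<Rightarrow> 'a::euclidean_space) \<Rightarrow> (nat \<Rightarrow> 'a) \<Rightarrow> nat \<Rightarrow> 'a" where
  "hQ_min n N y x' i =
     inverse (\<Sum>m=1..N. inverse (norm (x' i - y m))) *\<^sub>R
       ((real N / real n) *\<^sub>R (\<Sum>j\<in>{1..n} - {i}. (1 / norm (x' i - x' j)) *\<^sub>R (x' i - x' j))
        + (\<Sum>m=1..N. (1 / norm (x' i - y m)) *\<^sub>R y m))"

end

theory Submission
  imports Defs
begin

(* Majorisation: each attraction term b = norm (y m - x i) is bounded by the quadratic
   b^2 / (2 a) + a / 2 with a = norm (y m - x' i) (AM-GM, tight at b = a), and each repulsion
   term norm (x i - x j) is bounded below by its tangent plane at x' i - x' j, the norm being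
   convex; symmetrising over the pairs (i, j) and (j, i) turns the sum of the tangents into
   exactly the linear term of hQ.
   Minimisation: hQ is a sum over i of isotropic quadratics in x i with curvature
   (sum over m of 1 / norm (x' i - y m)) / (n N) > 0, so completing the square exhibits
   hQ_min as the unique minimiser. *)

lemma le_sq_div_add_half:
  fixes a b :: real
  assumes "a > 0"
  shows "b \<le> b\<^sup>2 / (2 * a) + a / 2"
proof -
  have "2 * a * b \<le> b\<^sup>2 + a\<^sup>2"
    using sum_squares_bound[of a b] by (simp add: power2_eq_square algebra_simps)
  with assms show ?thesis by (simp add: field_simps power2_eq_square)
qed

lemma norm_tangent_le:
  fixes u v :: "'a::real_inner"
  shows "norm v + (u - v) \<bullet> v / norm v \<le> norm u"
proof (cases "v = 0")
  case False
  then have "norm v + (u - v) \<bullet> v / norm v = u \<bullet> v / norm v"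
    by (simp add: inner_diff_left field_simps power2_eq_square flip: power2_norm_eq_inner)
  also have "\<dots> \<le> norm u"
    using False norm_cauchy_schwarz[of u v] by (simp add: divide_le_eq)
  finally show ?thesis .
qed simp

lemma sum_offdiag_swap:
  assumes "finite S"
  shows "(\<Sum>i\<in>S. \<Sum>j\<in>S - {i}. f i j) = (\<Sum>i\<in>S. \<Sum>j\<in>S - {i}. f j i)"
proof -
  have "\<And>i. S - {i} = {j. j \<in> S \<and> i \<noteq> j}" "\<And>j. S - {j} = {i. i \<in> S \<and> i \<noteq> j}"
    by auto
  then show ?thesis
    using sum.swap_restrict[OF assms assms, of f "\<lambda>i j. i \<noteq> j"] by simp
qed

lemma sum_pairwise_norm_ge_tangent:
  fixes x p :: "'b \<Rightarrow> 'a::real_inner"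
  assumes "finite S"
  shows "(\<Sum>i\<in>S. \<Sum>j\<in>S - {i}. norm (p i - p j) + 2 * ((x i - p i) \<bullet> (p i - p j)) / norm (p i - p j))
    \<le> (\<Sum>i\<in>S. \<Sum>j\<in>S. norm (x i - x j))"
proof -
  define g where "g i j = (x i - p i) \<bullet> (p i - p j) / norm (p i - p j)" for i j
  have g_sum: "g i j + g j i = ((x i - x j) - (p i - p j)) \<bullet> (p i - p j) / norm (p i - p j)" for i j
  proof -
    have "g j i = - ((x j - p j) \<bullet> (p i - p j) / norm (p i - p j))"
      unfolding g_def by (metis inner_minus_right minus_diff_eq minus_divide_left norm_minus_commute)
    then show ?thesis
      by (simp add: g_def inner_diff_left add_divide_distrib diff_divide_distrib)
  qed
  have "(\<Sum>i\<in>S. \<Sum>j\<in>S - {i}. norm (p i - p j) + 2 * ((x i - p i) \<bullet> (p i - p j)) / norm (p i - p j))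
      = (\<Sum>i\<in>S. \<Sum>j\<in>S - {i}. norm (p i - p j)) + (\<Sum>i\<in>S. \<Sum>j\<in>S - {i}. g i j)
        + (\<Sum>i\<in>S. \<Sum>j\<in>S - {i}. g i j)"
    by (simp add: g_def sum.distrib sum_distrib_left)
  also have "\<dots> = (\<Sum>i\<in>S. \<Sum>j\<in>S - {i}. norm (p i - p j) + (g i j + g j i))"
    by (simp add: sum.distrib sum_offdiag_swap[OF assms, of g])
  also have "\<dots> \<le> (\<Sum>i\<in>S. \<Sum>j\<in>S - {i}. norm (x i - x j))"
    unfolding g_sum by (intro sum_mono norm_tangent_le)
  also have "\<dots> = (\<Sum>i\<in>S. \<Sum>j\<in>S. norm (x i - x j))"
    using assms by (simp add: sum_diff1)
  finally show ?thesis .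
qed

lemma norm_diff_sq:
  fixes u v :: "'a::real_inner"
  shows "(norm (u - v))\<^sup>2 = (norm u)\<^sup>2 - 2 * (u \<bullet> v) + (norm v)\<^sup>2"
  by (simp add: power2_norm_eq_inner inner_diff_left inner_diff_right inner_commute)

lemma sum_weighted_sq_dist_expand:
  fixes y :: "'b \<Rightarrow> 'a::real_inner"
  shows "(\<Sum>m\<in>M. w m * (norm (y m - z))\<^sup>2)
    = (\<Sum>m\<in>M. w m * (norm (y m))\<^sup>2) - 2 * (z \<bullet> (\<Sum>m\<in>M. w m *\<^sub>R y m)) + (\<Sum>m\<in>M. w m) * (norm z)\<^sup>2"
proof -
  have "w m * (norm (y m - z))\<^sup>2 = w m * (norm (y m))\<^sup>2 - 2 * (z \<bullet> (w m *\<^sub>R y m)) + w m * (norm z)\<^sup>2" for m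
    by (simp add: norm_diff_sq inner_commute algebra_simps)
  then show ?thesis
    by (simp add: sum.distrib sum_subtractf inner_sum_right sum_distrib_left sum_distrib_right)
qed

lemma sum_weighted_sq_dist_complete_square:
  fixes y :: "'b \<Rightarrow> 'a::real_inner" and P :: 'a
  assumes "(\<Sum>m\<in>M. w m) \<noteq> 0"
  defines "c \<equiv> inverse (\<Sum>m\<in>M. w m) *\<^sub>R (P + (\<Sum>m\<in>M. w m *\<^sub>R y m))"
  shows "(\<Sum>m\<in>M. w m * (norm (y m - z))\<^sup>2) - 2 * (z \<bullet> P)
    = (\<Sum>m\<in>M. w m * (norm (y m - c))\<^sup>2) - 2 * (c \<bullet> P) + (\<Sum>m\<in>M. w m) * (norm (z - c))\<^sup>2"
proof -
  define L where "L = (\<Sum>m\<in>M. w m)"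
  define Y where "Y = (\<Sum>m\<in>M. w m *\<^sub>R y m)"
  have centre: "P + Y = L *\<^sub>R c"
    using assms by (simp add: c_def L_def Y_def)
  have inner_Y: "u \<bullet> Y = L * (u \<bullet> c) - u \<bullet> P" for u
    by (metis centre add_diff_cancel_left' inner_add_right inner_scaleR_right)
  show ?thesis
    unfolding sum_weighted_sq_dist_expand L_def[symmetric] Y_def[symmetric] norm_diff_sq[of z c] inner_Y
    by (simp add: power2_norm_eq_inner algebra_simps)
qed

lemma argmin_sum_weighted_sq_dist:
  fixes F :: "('b \<Rightarrow> 'a::real_normed_vector) \<Rightarrow> real"
  assumes "finite S" and "\<forall>i\<in>S. \<alpha> i > 0"
    and F: "\<And>x. F x = F c + (\<Sum>i\<in>S. \<alpha> i * (norm (x i - c i))\<^sup>2)"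
  shows "(\<forall>x. F c \<le> F x) \<and> (\<forall>x. (\<forall>z. F x \<le> F z) \<longrightarrow> (\<forall>i\<in>S. x i = c i))"
proof -
  have nonneg: "\<forall>i\<in>S. 0 \<le> \<alpha> i * (norm (x i - c i))\<^sup>2" for x
    using assms(2) by auto
  then have excess_nonneg: "0 \<le> (\<Sum>i\<in>S. \<alpha> i * (norm (x i - c i))\<^sup>2)" for x
    by (simp add: sum_nonneg)
  have "F c \<le> F x" for x
    using F[of x] excess_nonneg[of x] by linarith
  moreover have "x i = c i" if "\<forall>z. F x \<le> F z" and "i \<in> S" for x i
  proof -
    have "(\<Sum>i\<in>S. \<alpha> i * (norm (x i - c i))\<^sup>2) = 0"
      using that(1)[rule_format, of c] F[of x] excess_nonneg[of x] by linarith
    then have "\<alpha> i * (norm (x i - c i))\<^sup>2 = 0"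
      by (subst (asm) sum_nonneg_eq_0_iff[OF assms(1)]) (use nonneg[of x] \<open>i \<in> S\<close> in auto)
    then show ?thesis
      using assms(2) \<open>i \<in> S\<close> by fastforce
  qed
  ultimately show ?thesis
    by blast
qed

definition hQ_term :: "nat \<Rightarrow> nat \<Rightarrow> (nat \<Rightarrow> 'a::euclidean_space) \<Rightarrow> (nat \<Rightarrow> 'a) \<Rightarrow> nat \<Rightarrow> 'a \<Rightarrow> real" where
  "hQ_term n N y x' i z =
     2 / (real n * real N) * (\<Sum>m=1..N.
        (norm (y m - z))\<^sup>2 / (2 * norm (y m - x' i)) + norm (y m - x' i) / 2)
     - 1 / (real n)\<^sup>2 * (\<Sum>j\<in>{1..n} - {i}.
        norm (x' i - x' j) + 2 * ((z - x' i) \<bullet> (x' i - x' j)) / norm (x' i - x' j))"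

lemma hQ_eq_sum_hQ_term: "hQ n N y x' x = (\<Sum>i=1..n. hQ_term n N y x' i (x i))"
  unfolding hQ_def hQ_term_def by (simp add: sum_distrib_left sum_subtractf)

lemma hQ_term_diff:
  fixes y x' :: "nat \<Rightarrow> 'a::euclidean_space" and n N i :: nat
  assumes "N \<noteq> 0"
  defines "P \<equiv> (real N / real n) *\<^sub>R (\<Sum>j\<in>{1..n} - {i}. (1 / norm (x' i - x' j)) *\<^sub>R (x' i - x' j))"
  defines "Q \<equiv> \<lambda>z. (\<Sum>m=1..N. inverse (norm (x' i - y m)) * (norm (y m - z))\<^sup>2) - 2 * (z \<bullet> P)"
  shows "hQ_term n N y x' i z - hQ_term n N y x' i u = (Q z - Q u) / (real n * real N)"
proof -
  define W where "W = (\<Sum>j\<in>{1..n} - {i}. (1 / norm (x' i - x' j)) *\<^sub>R (x' i - x' j))"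
  have attraction: "(\<Sum>m=1..N. (norm (y m - z))\<^sup>2 / (2 * norm (y m - x' i)) + norm (y m - x' i) / 2)
      = (\<Sum>m=1..N. inverse (norm (x' i - y m)) * (norm (y m - z))\<^sup>2) / 2 + (\<Sum>m=1..N. norm (y m - x' i) / 2)" for z
  proof -
    have "b\<^sup>2 / (2 * a) + a / 2 = inverse a * b\<^sup>2 / 2 + a / 2" for a b :: real
      by (cases "a = 0") (simp_all add: field_simps)
    then have "(\<Sum>m=1..N. (norm (y m - z))\<^sup>2 / (2 * norm (y m - x' i)) + norm (y m - x' i) / 2)
      = (\<Sum>m=1..N. inverse (norm (x' i - y m)) * (norm (y m - z))\<^sup>2 / 2 + norm (y m - x' i) / 2)"
      by (intro sum.cong) (auto simp: norm_minus_commute)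
    then show ?thesis
      by (simp add: sum.distrib sum_divide_distrib)
  qed
  have repulsion: "(\<Sum>j\<in>{1..n} - {i}. norm (x' i - x' j) + 2 * ((z - x' i) \<bullet> (x' i - x' j)) / norm (x' i - x' j))
      = 2 * (z \<bullet> W) + (\<Sum>j\<in>{1..n} - {i}. norm (x' i - x' j) - 2 * (x' i \<bullet> (x' i - x' j)) / norm (x' i - x' j))" for z
  proof -
    have "norm v + 2 * ((z - p) \<bullet> v) / norm v = 2 * (z \<bullet> ((1 / norm v) *\<^sub>R v)) + (norm v - 2 * (p \<bullet> v) / norm v)"
      for p v :: 'a
      by (simp add: inner_diff_left diff_divide_distrib right_diff_distrib)
    then have "(\<Sum>j\<in>{1..n} - {i}. norm (x' i - x' j) + 2 * ((z - x' i) \<bullet> (x' i - x' j)) / norm (x' i - x' j))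
      = (\<Sum>j\<in>{1..n} - {i}. 2 * (z \<bullet> ((1 / norm (x' i - x' j)) *\<^sub>R (x' i - x' j)))
          + (norm (x' i - x' j) - 2 * (x' i \<bullet> (x' i - x' j)) / norm (x' i - x' j)))"
      by (intro sum.cong) auto
    then show ?thesis
      by (simp add: W_def sum.distrib inner_sum_right sum_distrib_left)
  qed
  have inner_P: "z \<bullet> P = real N / real n * (z \<bullet> W)" for z
    by (simp add: P_def W_def)
  show ?thesis
    unfolding hQ_term_def attraction repulsion Q_def inner_P using assms(1)
    by (cases "n = 0") (simp_all add: field_simps power2_eq_square)
qed

lemma sum_inverse_dist_pos:
  fixes y :: "nat \<Rightarrow> 'a::real_normed_vector"
  assumes "N \<noteq> 0" and "\<forall>m\<in>{1..N}. p \<noteq> y m"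
  shows "0 < (\<Sum>m=1..N. inverse (norm (p - y m)))"
  using assms by (intro sum_pos) auto

lemma hQ_term_complete_square:
  fixes y x' :: "nat \<Rightarrow> 'a::euclidean_space"
  assumes "N \<noteq> 0" and "\<forall>m\<in>{1..N}. x' i \<noteq> y m"
  shows "hQ_term n N y x' i z = hQ_term n N y x' i (hQ_min n N y x' i)
    + (\<Sum>m=1..N. inverse (norm (x' i - y m))) / (real n * real N) * (norm (z - hQ_min n N y x' i))\<^sup>2"
proof -
  define w where "w m = inverse (norm (x' i - y m))" for m
  define P where "P = (real N / real n) *\<^sub>R (\<Sum>j\<in>{1..n} - {i}. (1 / norm (x' i - x' j)) *\<^sub>R (x' i - x' j))"
  define c where "c = hQ_min n N y x' i"
  have "(\<Sum>m=1..N. w m) \<noteq> 0"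
    using sum_inverse_dist_pos[OF assms] by (simp add: w_def)
  moreover have "c = inverse (\<Sum>m=1..N. w m) *\<^sub>R (P + (\<Sum>m=1..N. w m *\<^sub>R y m))"
    by (simp add: c_def hQ_min_def w_def P_def inverse_eq_divide)
  ultimately have "(\<Sum>m=1..N. w m * (norm (y m - z))\<^sup>2) - 2 * (z \<bullet> P)
      = (\<Sum>m=1..N. w m * (norm (y m - c))\<^sup>2) - 2 * (c \<bullet> P) + (\<Sum>m=1..N. w m) * (norm (z - c))\<^sup>2"
    using sum_weighted_sq_dist_complete_square by blast
  with hQ_term_diff[OF assms(1), where z = z and u = c] show ?thesis
    unfolding c_def w_def P_def by (simp add: field_simps)
qed

lemma hQ_eq_hQ_min_add:
  fixes y x' :: "nat \<Rightarrow> 'a::euclidean_space"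
  assumes "N \<noteq> 0" and "\<forall>i\<in>{1..n}. \<forall>m\<in>{1..N}. x' i \<noteq> y m"
  shows "hQ n N y x' x = hQ n N y x' (hQ_min n N y x')
    + (\<Sum>i=1..n. (\<Sum>m=1..N. inverse (norm (x' i - y m))) / (real n * real N) * (norm (x i - hQ_min n N y x' i))\<^sup>2)"
  unfolding hQ_eq_sum_hQ_term sum.distrib[symmetric]
  using assms(2) by (intro sum.cong refl hQ_term_complete_square[OF assms(1)]) auto

lemma Ehat_le_hQ:
  fixes y x' :: "nat \<Rightarrow> 'a::euclidean_space"
  assumes "\<forall>i\<in>{1..n}. \<forall>m\<in>{1..N}. x' i \<noteq> y m"
  shows "Ehat n N y x \<le> hQ n N y x' x"
proof -
  have "(\<Sum>i=1..n. \<Sum>m=1..N. norm (y m - x i))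
      \<le> (\<Sum>i=1..n. \<Sum>m=1..N. (norm (y m - x i))\<^sup>2 / (2 * norm (y m - x' i)) + norm (y m - x' i) / 2)"
    using assms by (intro sum_mono le_sq_div_add_half) fastforce
  moreover have "(\<Sum>i=1..n. \<Sum>j\<in>{1..n} - {i}.
        norm (x' i - x' j) + 2 * ((x i - x' i) \<bullet> (x' i - x' j)) / norm (x' i - x' j))
      \<le> (\<Sum>i=1..n. \<Sum>j=1..n. norm (x i - x j))"
    by (rule sum_pairwise_norm_ge_tangent) simp
  ultimately show ?thesis
    unfolding Ehat_def hQ_def by (intro diff_mono mult_left_mono) auto
qed

lemma hQ_self_eq_Ehat: "hQ n N y x' x' = Ehat n N y x'"
proof -
  have "b\<^sup>2 / (2 * b) + b / 2 = b" for b :: real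
    by (cases "b = 0") (simp_all add: field_simps power2_eq_square)
  moreover have "(\<Sum>j\<in>{1..n} - {i}. norm (x' i - x' j)) = (\<Sum>j=1..n. norm (x' i - x' j))" for i
    by (simp add: sum_diff1)
  ultimately show ?thesis
    unfolding hQ_def Ehat_def by simp
qed

theorem lemma6:
  fixes y x' :: "nat \<Rightarrow> 'a::euclidean_space" and n N :: nat
  assumes "n \<ge> 1" and "N \<ge> 1"
    and "inj_on x' {1..n}"
    and "\<forall>i\<in>{1..n}. \<forall>m\<in>{1..N}. x' i \<noteq> y m"
  shows "(\<forall>x. hQ n N y x' x \<ge> Ehat n N y x)
       \<and> hQ n N y x' x' = Ehat n N y x'
       \<and> (\<forall>x. hQ n N y x' (hQ_min n N y x') \<le> hQ n N y x' x)
       \<and> (\<forall>x. (\<forall>z. hQ n N y x' x \<le> hQ n N y x' z) \<longrightarrow> (\<forall>i\<in>{1..n}. x i = hQ_min n N y x' i))"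
proof -
  have N: "N \<noteq> 0"
    using assms(2) by simp
  have "0 < (\<Sum>m=1..N. inverse (norm (x' i - y m))) / (real n * real N)" if "i \<in> {1..n}" for i
    using sum_inverse_dist_pos[OF N bspec[OF assms(4) that]] assms(1,2) by simp
  from argmin_sum_weighted_sq_dist[OF finite_atLeastAtMost ballI[OF this] hQ_eq_hQ_min_add[OF N assms(4)]]
  show ?thesis
    using Ehat_le_hQ[OF assms(4)] hQ_self_eq_Ehat by simp
qed

end
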